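(* Let $\mathbf{k}=\bigoplus_{i=1}^N\mathbb{F}_2$, let $A$ and $B$ be differential graded algebras over $\mathbf{k}$, and let $f,g\colon A\to B$ be $\mathcal{A}_\infty$-homomorphisms. Suppose the rank-one type DA bimodules ${}^{B}[f]_A$ and ${}^{B}[g]_A$ are homotopy equivalent. Then $f$ and $g$ induce conjugate maps on homology: there is an invertible element $u\in H_*(B)$ such that for every cycle $a\in A$, $[f_1(a)]=u\,[g_1(a)]\,u^{-1}$ in $H_*(B)$.
   Context: Work over $\mathbb{F}_2$ (no signs); tensor products are over $\mathbf{k}$. An $\mathcal{A}_\infty$-homomorphism $f\colon A\to B$ of differential algebras is a family of $\mathbf{k}$-bimodule maps $f_n\colon A^{\otimes n}\to B$, $n\ge1$, with $d_Bf_n(a_1,\dots,a_n)+\sum_i f_n(a_1,\dots,da_i,\dots,a_n)+\sum_{i=1}^{n-1}f_{n-1}(a_1,\dots,a_ia_{i+1},\dots,a_n)+\sum_{j=1}^{n-1}f_j(a_1,\dots,a_j)f_{n-j}(a_{j+1},\dots,a_n)=0$. A type DA structure ${}^BX_A$ is a $\mathbf{k}$-bimodule $X$ with maps $\delta_{1+n}\colon X\otimes A^{\otimes n}\to B\otimes X$ ($n\ge0$) satisfying $\sum_{j=0}^n(\mu_B\otimes\mathrm{Id})(\mathrm{Id}_B\otimes\delta_{1+n-j})(\delta_{1+j}(x,a_1,\dots,a_j)\otimes a_{j+1}\otimes\cdots\otimes a_n)+(d_B\otimes\mathrm{Id})\delta_{1+n}(x,a_1,\dots,a_n)+\sum_i\delta_{1+n}(x,\dots,da_i,\dots)+\sum_{i=1}^{n-1}\delta_n(x,\dots,a_ia_{i+1},\dots)=0$.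 The bimodule ${}^B[f]_A$ has underlying $\mathbf{k}$-bimodule $\mathbf{k}$, $\delta_1=0$, and (identifying $\mathbf{k}\otimes A^{\otimes n}$ with $A^{\otimes n}$ and $B\otimes\mathbf{k}$ with $B$) $\delta_{1+n}=f_n$ for $n\ge1$. A morphism $\phi\colon X\to Y$ of type DA structures is a family $\phi_{1+n}\colon X\otimes A^{\otimes n}\to B\otimes Y$; its differential is $(\partial\phi)_{1+n}(x,a_1,\dots,a_n)=\sum_{j=0}^n(\mu_B\otimes\mathrm{Id})(\mathrm{Id}\otimes\delta^Y_{1+n-j})(\phi_{1+j}(x,a_1,\dots,a_j)\otimes a_{j+1}\otimes\cdots\otimes a_n)+\sum_{j=0}^n(\mu_B\otimes\mathrm{Id})(\mathrm{Id}\otimes\phi_{1+n-j})(\delta^X_{1+j}(x,a_1,\dots,a_j)\otimes a_{j+1}\otimes\cdots\otimes a_n)+(d_B\otimes\mathrm{Id})\phi_{1+n}(x,a_1,\dots,a_n)+\sum_i\phi_{1+n}(x,\dots,da_i,\dots)+\sum_{i=1}^{n-1}\phi_n(x,\dots,a_ia_{i+1},\dots)$. Composition is $(\psi\circ\phi)_{1+n}(x,a_1,\dots,a_n)=\sum_j(\mu_B\otimes\mathrm{Id})(\mathrm{Id}\otimes\psi_{1+n-j})(\phi_{1+j}(x,a_1,\dots,a_j)\otimes a_{j+1}\otimes\cdots\otimes a_n)$, and the identity has $\mathrm{Id}_1(x)=1\otimes x$, $\mathrm{Id}_{1+n}=0$ for $n\ge1$. Two type DA structures are homotopy equivalent if there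 are morphisms $\phi\colon X\to Y$, $\psi\colon Y\to X$ with $\partial\phi=\partial\psi=0$ and morphisms $F,G$ with $\partial F=\psi\circ\phi+\mathrm{Id}_X$ and $\partial G=\phi\circ\psi+\mathrm{Id}_Y$. *)

theory Defs
  imports Main
begin

text \<open>Ground ring k = F2^N, modelled by N orthogonal idempotents e 0, ..., e (N-1).\<close>

definition unit_k :: "nat \<Rightarrow> (nat \<Rightarrow> 'a::ring) \<Rightarrow> 'a" where
  "unit_k N e = (\<Sum>i<N. e i)"

definition dga_over :: "nat \<Rightarrow> (nat \<Rightarrow> 'a::ring) \<Rightarrow> ('a \<Rightarrow> 'a) \<Rightarrow> bool" where
  "dga_over N e d \<longleftrightarrow>
     (\<forall>x::'a. x + x = 0) \<and>
     (\<forall>i<N. \<forall>j<N. e i * e j = (if i = j then e i else 0)) \<and>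
     (\<forall>x. unit_k N e * x = x \<and> x * unit_k N e = x) \<and>
     (\<forall>i<N. d (e i) = 0) \<and>
     (\<forall>x y. d (x + y) = d x + d y) \<and>
     (\<forall>x y. d (x * y) = d x * y + x * d y) \<and>
     (\<forall>x. d (d x) = 0)"

text \<open>A k-bimodule map A^{\<otimes>_k n} -> B is represented by its values on lists of length n:
  additive in each slot, k-balanced, and compatible with the outer k-actions.
  These conditions only concern nonempty lists.\<close>

definition kmap_pos :: "nat \<Rightarrow> (nat \<Rightarrow> 'a::ring) \<Rightarrow> (nat \<Rightarrow> 'b::ring) \<Rightarrow> ('a list \<Rightarrow> 'b) \<Rightarrow> bool" where
  "kmap_pos N eA eB \<phi> \<longleftrightarrow>
     (\<forall>xs x y ys. \<phi> (xs @ (x + y) # ys) = \<phi> (xs @ x # ys) + \<phi> (xs @ y # ys)) \<and>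
     (\<forall>xs x y ys. \<forall>i<N. \<phi> (xs @ (x * eA i) # y # ys) = \<phi> (xs @ x # (eA i * y) # ys)) \<and>
     (\<forall>x xs. \<forall>i<N. \<phi> ((eA i * x) # xs) = eB i * \<phi> (x # xs)) \<and>
     (\<forall>xs x. \<forall>i<N. \<phi> (xs @ [x * eA i]) = \<phi> (xs @ [x]) * eB i)"

text \<open>Morphism component phi_1 : k -> B (tensor) k = B is a bimodule map, i.e. given by
  the element phi [] commuting with the idempotents.\<close>

definition kmor :: "nat \<Rightarrow> (nat \<Rightarrow> 'a::ring) \<Rightarrow> (nat \<Rightarrow> 'b::ring) \<Rightarrow> ('a list \<Rightarrow> 'b) \<Rightarrow> bool" where
  "kmor N eA eB \<phi> \<longleftrightarrow> kmap_pos N eA eB \<phi> \<and> (\<forall>i<N. eB i * \<phi> [] = \<phi> [] * eB i)"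

definition merge_at :: "nat \<Rightarrow> 'a::times list \<Rightarrow> 'a list" where
  "merge_at i as = take i as @ (as ! i * as ! Suc i) # drop (Suc (Suc i)) as"

definition ainf_hom ::
  "nat \<Rightarrow> (nat \<Rightarrow> 'a::ring) \<Rightarrow> ('a \<Rightarrow> 'a) \<Rightarrow> (nat \<Rightarrow> 'b::ring) \<Rightarrow> ('b \<Rightarrow> 'b) \<Rightarrow> ('a list \<Rightarrow> 'b) \<Rightarrow> bool" where
  "ainf_hom N eA dA eB dB f \<longleftrightarrow> kmap_pos N eA eB f \<and>
     (\<forall>as. as \<noteq> [] \<longrightarrow>
        dB (f as) + (\<Sum>i<length as. f (as[i := dA (as ! i)]))
        + (\<Sum>i<length as - 1. f (merge_at i as))
        + (\<Sum>j\<in>{1..<length as}. f (take j as) * f (drop j as)) = 0)"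

text \<open>The rank-one type DA structure [f]: delta_1 = 0, delta_{1+n} = f_n.\<close>

definition rk1 :: "('a list \<Rightarrow> 'b::zero) \<Rightarrow> 'a list \<Rightarrow> 'b" where
  "rk1 f as = (if as = [] then 0 else f as)"

definition dmor ::
  "('a::ring \<Rightarrow> 'a) \<Rightarrow> ('b::ring \<Rightarrow> 'b) \<Rightarrow> ('a list \<Rightarrow> 'b) \<Rightarrow> ('a list \<Rightarrow> 'b) \<Rightarrow> ('a list \<Rightarrow> 'b) \<Rightarrow> 'a list \<Rightarrow> 'b" where
  "dmor dA dB \<delta>X \<delta>Y \<phi> as =
     (\<Sum>j\<le>length as. \<phi> (take j as) * \<delta>Y (drop j as))
     + (\<Sum>j\<le>length as. \<delta>X (take j as) * \<phi> (drop j as))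
     + dB (\<phi> as)
     + (\<Sum>i<length as. \<phi> (as[i := dA (as ! i)]))
     + (\<Sum>i<length as - 1. \<phi> (merge_at i as))"

definition comp_mor :: "('a list \<Rightarrow> 'b::ring) \<Rightarrow> ('a list \<Rightarrow> 'b) \<Rightarrow> 'a list \<Rightarrow> 'b" where
  "comp_mor \<psi> \<phi> as = (\<Sum>j\<le>length as. \<phi> (take j as) * \<psi> (drop j as))"

definition id_mor :: "nat \<Rightarrow> (nat \<Rightarrow> 'b::ring) \<Rightarrow> 'a list \<Rightarrow> 'b" where
  "id_mor N eB as = (if as = [] then unit_k N eB else 0)"

definition DA_htpy_equiv ::
  "nat \<Rightarrow> (nat \<Rightarrow> 'a::ring) \<Rightarrow> ('a \<Rightarrow> 'a) \<Rightarrow> (nat \<Rightarrow> 'b::ring) \<Rightarrow> ('b \<Rightarrow> 'b)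
   \<Rightarrow> ('a list \<Rightarrow> 'b) \<Rightarrow> ('a list \<Rightarrow> 'b) \<Rightarrow> bool" where
  "DA_htpy_equiv N eA dA eB dB \<delta>X \<delta>Y \<longleftrightarrow>
     (\<exists>\<phi> \<psi> F G. kmor N eA eB \<phi> \<and> kmor N eA eB \<psi> \<and> kmor N eA eB F \<and> kmor N eA eB G \<and>
        (\<forall>as. dmor dA dB \<delta>X \<delta>Y \<phi> as = 0) \<and>
        (\<forall>as. dmor dA dB \<delta>Y \<delta>X \<psi> as = 0) \<and>
        (\<forall>as. dmor dA dB \<delta>X \<delta>X F as = comp_mor \<psi> \<phi> as + id_mor N eB as) \<and>
        (\<forall>as. dmor dA dB \<delta>Y \<delta>Y G as = comp_mor \<phi> \<psi> as + id_mor N eB as))"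

definition cycles :: "('a \<Rightarrow> 'a::zero) \<Rightarrow> 'a set" where
  "cycles d = {x. d x = 0}"

definition boundaries :: "('a \<Rightarrow> 'a) \<Rightarrow> 'a set" where
  "boundaries d = {y. \<exists>x. y = d x}"

end

theory Submission
  imports Defs
begin

text \<open>The closed morphisms \<open>\<phi> : [f] \<rightarrow> [g]\<close> and \<open>\<psi> : [g] \<rightarrow> [f]\<close> of a homotopy equivalence
  have constant components \<open>u = \<phi>\<^sub>1\<close>, \<open>v = \<psi>\<^sub>1\<close>, which are cycles of \<open>B\<close>, and the homotopies
  give \<open>d(F\<^sub>1) = u v + 1\<close> and \<open>d(G\<^sub>1) = v u + 1\<close>, so \<open>[u]\<close> and \<open>[v]\<close> are inverse in homology.
  On a cycle \<open>a\<close>, the arity-one component of \<open>\<partial>\<phi> = 0\<close> reads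
  \<open>f\<^sub>1(a) u + u g\<^sub>1(a) = d(\<phi>\<^sub>2(a))\<close>; multiplying on the right by \<open>v\<close> and correcting with
  \<open>f\<^sub>1(a) F\<^sub>1\<close> exhibits \<open>f\<^sub>1(a) + u g\<^sub>1(a) v\<close> as a boundary.\<close>

lemma char2_diff_eq_add:
  fixes x y :: "'b::ring"
  assumes "\<And>z::'b. z + z = 0"
  shows "x - y = x + y"
proof -
  have "- y = y"
    using assms by (simp add: neg_eq_iff_add_eq_0)
  then show ?thesis
    by (metis diff_conv_add_uminus)
qed

lemma char2_add_eq_0_iff:
  fixes x y :: "'b::ring"
  assumes "\<And>z::'b. z + z = 0"
  shows "x + y = 0 \<longleftrightarrow> x = y"
  by (metis char2_diff_eq_add[OF assms] eq_iff_diff_eq_0)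

lemma kmap_pos_singleton_zero:
  assumes "kmap_pos N eA eB \<phi>"
  shows "\<phi> [0] = 0"
proof -
  have "\<phi> ([] @ (0 + 0) # []) = \<phi> ([] @ 0 # []) + \<phi> ([] @ 0 # [])"
    using assms unfolding kmap_pos_def by blast
  then show ?thesis by simp
qed

lemma dmor_rk1_Nil: "dmor dA dB (rk1 f) (rk1 g) \<phi> [] = dB (\<phi> [])"
  by (simp add: dmor_def rk1_def)

lemma dmor_rk1_singleton:
  "dmor dA dB (rk1 f) (rk1 g) \<phi> [a] = \<phi> [] * g [a] + f [a] * \<phi> [] + dB (\<phi> [a]) + \<phi> [dA a]"
  by (simp add: dmor_def rk1_def atMost_Suc)

lemma comp_mor_Nil: "comp_mor \<psi> \<phi> [] = \<phi> [] * \<psi> []"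
  by (simp add: comp_mor_def)

lemma id_mor_Nil: "id_mor N eB [] = unit_k N eB"
  by (simp add: id_mor_def)

lemma ainf_hom_singleton: "ainf_hom N eA dA eB dB f \<Longrightarrow> dB (f [a]) + f [dA a] = 0"
  unfolding ainf_hom_def by (drule conjunct2, drule spec[of _ "[a]"]) simp

lemma ainf_hom_cycle:
  assumes "ainf_hom N eA dA eB dB f" and "a \<in> cycles dA"
  shows "f [a] \<in> cycles dB"
proof -
  have "f [dA a] = 0"
    using assms kmap_pos_singleton_zero unfolding ainf_hom_def cycles_def by auto
  then show ?thesis
    using ainf_hom_singleton[OF assms(1), of a] by (simp add: cycles_def)
qed

lemma closed_mor_rk1_intertwines:
  fixes f g \<phi> :: "'a::ring list \<Rightarrow> 'b::ring"
  assumes "kmap_pos N eA eB \<phi>" and "\<And>as. dmor dA dB (rk1 f) (rk1 g) \<phi> as = 0"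
    and "\<And>z::'b. z + z = 0" and "a \<in> cycles dA"
  shows "f [a] * \<phi> [] = \<phi> [] * g [a] + dB (\<phi> [a])"
proof -
  have "\<phi> [dA a] = 0"
    using assms(1,4) kmap_pos_singleton_zero by (simp add: cycles_def)
  then have "(\<phi> [] * g [a] + dB (\<phi> [a])) + f [a] * \<phi> [] = 0"
    using assms(2)[of "[a]"] by (simp add: dmor_rk1_singleton algebra_simps)
  then have "\<phi> [] * g [a] + dB (\<phi> [a]) = f [a] * \<phi> []"
    by (rule char2_add_eq_0_iff[OF assms(3), THEN iffD1])
  then show ?thesis
    by (rule sym)
qed

text \<open>Applied with \<open>x = f\<^sub>1(a)\<close>, \<open>y = g\<^sub>1(a)\<close>, \<open>p = \<phi>\<^sub>2(a)\<close> and \<open>h = F\<^sub>1\<close>.\<close>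

lemma conjugate_mod_boundaries:
  fixes d :: "'b::ring \<Rightarrow> 'b"
  assumes char2: "\<And>z::'b. z + z = 0"
    and add: "\<And>x y. d (x + y) = d x + d y"
    and leibniz: "\<And>x y. d (x * y) = d x * y + x * d y"
    and unit: "x * e = x"
    and cycles: "d x = 0" "d v = 0"
    and intertwine: "x * u = u * y + d p"
    and homotopy: "d h = u * v + e"
  shows "x - u * y * v \<in> boundaries d"
proof -
  have "d (p * v + x * h) = d p * v + x * (u * v + e)"
    using add leibniz cycles homotopy by simp
  also have "\<dots> = d p * v + (u * y + d p) * v + x"
    by (simp add: distrib_left unit flip: intertwine mult.assoc)
  also have "\<dots> = x - u * y * v"
    by (simp add: algebra_simps char2 char2_diff_eq_add[OF char2])
  finally show ?thesis
    unfolding boundaries_def by (metis (mono_tags, lifting) mem_Collect_eq)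
qed

theorem lemma8p5:
  fixes N :: nat
    and eA :: "nat \<Rightarrow> 'a::ring" and dA :: "'a \<Rightarrow> 'a"
    and eB :: "nat \<Rightarrow> 'b::ring" and dB :: "'b \<Rightarrow> 'b"
    and f g :: "'a list \<Rightarrow> 'b"
  assumes "dga_over N eA dA" and "dga_over N eB dB"
    and "ainf_hom N eA dA eB dB f" and "ainf_hom N eA dA eB dB g"
    and "DA_htpy_equiv N eA dA eB dB (rk1 f) (rk1 g)"
  shows "\<exists>u v. u \<in> cycles dB \<and> v \<in> cycles dB \<and>
           u * v - unit_k N eB \<in> boundaries dB \<and> v * u - unit_k N eB \<in> boundaries dB \<and>
           (\<forall>a \<in> cycles dA. f [a] - u * g [a] * v \<in> boundaries dB)"
proof -
  have char2: "\<And>x::'b. x + x = 0" and add: "\<And>x y. dB (x + y) = dB x + dB y"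
    and leibniz: "\<And>x y. dB (x * y) = dB x * y + x * dB y"
    and unit: "\<And>x. x * unit_k N eB = x"
    using assms(2) unfolding dga_over_def by blast+
  obtain \<phi> \<psi> F G where \<phi>: "kmor N eA eB \<phi>"
    and \<phi>_closed: "\<And>as. dmor dA dB (rk1 f) (rk1 g) \<phi> as = 0"
    and \<psi>_closed: "\<And>as. dmor dA dB (rk1 g) (rk1 f) \<psi> as = 0"
    and F: "\<And>as. dmor dA dB (rk1 f) (rk1 f) F as = comp_mor \<psi> \<phi> as + id_mor N eB as"
    and G: "\<And>as. dmor dA dB (rk1 g) (rk1 g) G as = comp_mor \<phi> \<psi> as + id_mor N eB as"
    using assms(5) unfolding DA_htpy_equiv_def by blast
  have dF: "dB (F []) = \<phi> [] * \<psi> [] + unit_k N eB"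
    using F[of "[]"] by (simp add: dmor_rk1_Nil comp_mor_Nil id_mor_Nil)
  have dG: "dB (G []) = \<psi> [] * \<phi> [] + unit_k N eB"
    using G[of "[]"] by (simp add: dmor_rk1_Nil comp_mor_Nil id_mor_Nil)
  have "f [a] - \<phi> [] * g [a] * \<psi> [] \<in> boundaries dB" if a: "a \<in> cycles dA" for a
  proof (rule conjugate_mod_boundaries[OF char2 add leibniz unit _ _ _ dF])
    show "dB (f [a]) = 0"
      using ainf_hom_cycle[OF assms(3) a] by (simp add: cycles_def)
    show "dB (\<psi> []) = 0"
      using \<psi>_closed[of "[]"] by (simp add: dmor_rk1_Nil)
    show "f [a] * \<phi> [] = \<phi> [] * g [a] + dB (\<phi> [a])"
      using \<phi> closed_mor_rk1_intertwines[OF _ \<phi>_closed char2 a] unfolding kmor_def by blast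
  qed
  moreover have "\<phi> [] \<in> cycles dB" "\<psi> [] \<in> cycles dB"
    using \<phi>_closed[of "[]"] \<psi>_closed[of "[]"] by (simp_all add: cycles_def dmor_rk1_Nil)
  moreover have "\<phi> [] * \<psi> [] - unit_k N eB = dB (F [])"
    "\<psi> [] * \<phi> [] - unit_k N eB = dB (G [])"
    using dF dG by (simp_all add: char2_diff_eq_add[OF char2])
  then have "\<phi> [] * \<psi> [] - unit_k N eB \<in> boundaries dB"
    "\<psi> [] * \<phi> [] - unit_k N eB \<in> boundaries dB"
    unfolding boundaries_def by blast+
  ultimately show ?thesis by blast
qed

end
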